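(* In the setting of the context, let $\omega=i\omega_\Im$ with $\omega_\Im\in\mathbb{R}$ and $\omega\notin\{0,\delta_+,\delta_-\}$. Then $\omega\in W_\Omega(T)$ if and only if at least one of the following holds: $$-\omega_\Im^2-\frac{\omega_\Im^2}{c+d\omega_\Im+\omega_\Im^2}\inf W(B)\in\overline{W(A)},\qquad -\omega_\Im^2-\frac{\omega_\Im^2}{c+d\omega_\Im+\omega_\Im^2}\sup W(B)\in\overline{W(A)},$$ $$-\frac{c+d\omega_\Im+\omega_\Im^2}{\omega_\Im^2}\bigl(\omega_\Im^2+\inf W(A)\bigr)\in\overline{W(B)}.$$
   Context: Let $\mathcal{H}$ be a Hilbert space, $A$ a selfadjoint (possibly unbounded) operator in $\mathcal{H}$ and $B$ a nonzero bounded selfadjoint operator. Let $c\ge0$, $d>0$, $\delta_\pm:=\pm\sqrt{c-d^2/4}-id/2$ (principal square root). $W(A),W(B)\subset\mathbb{R}$ are the numerical ranges. For real $\alpha,\beta$ let $p_{(\alpha,\beta)}(\omega):=(\alpha-\omega^2)(c-id\omega-\omega^2)-\beta\omega^2$ with roots $r_1,\dots,r_4$ labelled continuously in $(\alpha,\beta)$ and extended by limits to $\overline{\mathbb{R}}\times\mathbb{R}$ ($\overline{\mathbb{R}}=\mathbb{R}\cup\{\pm\infty\}$), values in $\overline{\mathbb{C}}=\mathbb{C}\cup\{\infty\}$. Let $\Omega:=\overline{W(A)}\times\overline{W(B)}$ (closure of $W(A)$ in $\overline{\mathbb{R}}$) and $W_\Omega(T):=\bigcup_{n=1}^4\bigcup_{(\alpha,\beta)\in\Omega}r_n(\alpha,\beta)$.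 *)

theory Defs
  imports "HOL-Analysis.Analysis" "HOL-Library.Extended_Real"
begin

definition pT :: "real \<Rightarrow> real \<Rightarrow> real \<Rightarrow> real \<Rightarrow> complex \<Rightarrow> complex" where
  "pT c d \<alpha> \<beta> w = (of_real \<alpha> - w\<^sup>2) * (of_real c - \<i> * of_real d * w - w\<^sup>2) - of_real \<beta> * w\<^sup>2"

definition delta_p :: "real \<Rightarrow> real \<Rightarrow> complex" where
  "delta_p c d = csqrt (of_real (c - d\<^sup>2 / 4)) - \<i> * of_real d / 2"
definition delta_m :: "real \<Rightarrow> real \<Rightarrow> complex" where
  "delta_m c d = - csqrt (of_real (c - d\<^sup>2 / 4)) - \<i> * of_real d / 2"

text \<open>Finite values of the roots r_1..r_4 at (alpha,beta) in extended-real x real,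
  the roots being extended by limits: all limits of roots of p_(alpha_k,beta_k)
  with real (alpha_k,beta_k) tending to (alpha,beta).\<close>
definition root_vals :: "real \<Rightarrow> real \<Rightarrow> ereal \<Rightarrow> real \<Rightarrow> complex set" where
  "root_vals c d a b = {z. \<exists>as bs zs. (\<forall>k. pT c d (as k) (bs k) (zs k) = 0)
      \<and> ((\<lambda>k. ereal (as k)) \<longlongrightarrow> a) sequentially \<and> bs \<longlonglongrightarrow> b \<and> zs \<longlonglongrightarrow> z}"

text \<open>W_Omega(T) intersected with C, for Omega = closure of W(A) in extended reals
  times closure of W(B).\<close>
definition W_Omega :: "real \<Rightarrow> real \<Rightarrow> real set \<Rightarrow> real set \<Rightarrow> complex set" where
  "W_Omega c d WA WB = (\<Union>a\<in>closure (ereal ` WA). \<Union>b\<in>closure WB. root_vals c d a b)"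

end

theory Submission
  imports Defs
begin

text \<open>On the imaginary axis the quartic is real: p(alpha,beta)(i t) = (alpha + t^2) q + beta t^2
  with q = c + d t + t^2, and q \<noteq> 0 because i t is not one of the roots delta_+, delta_- of the
  quadratic factor c - i d w - w^2. Away from these roots alpha is a continuous function of a root w
  and of beta, so limits of roots near i t only come from finite alpha, and i t \<in> W_Omega exactly when
  the line alpha = -t^2 - (t^2/q) beta meets closure W(A) \<times> [inf W(B), sup W(B)]. Since closure W(A)
  is an interval, the segment cut out by the line meets it iff one of its endpoints or inf W(A) lies
  in it; these are the three alternatives.\<close>

lemma closure_convex_meets_closed_segment_iff:
  fixes S :: "real set"
  assumes S: "S \<noteq> {}" "convex S"
  shows "closure S \<inter> closed_segment u v \<noteq> {} \<longleftrightarrow>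
    u \<in> closure S \<or> v \<in> closure S \<or> (bdd_below S \<and> Inf S \<in> closed_segment u v)"
proof
  assume "closure S \<inter> closed_segment u v \<noteq> {}"
  then obtain x where x: "x \<in> closure S" "x \<in> closed_segment u v" by blast
  define m M where "m = min u v" and "M = max u v"
  have seg: "closed_segment u v = {m..M}"
    unfolding m_def M_def closed_segment_eq_real_ivl by auto
  have ivl: "y \<in> closure S" if "a \<in> closure S" "b \<in> closure S" "a \<le> y" "y \<le> b" for a b y
    using S(2) convex_closure is_interval_convex_1 that unfolding is_interval_1 by blast
  show "u \<in> closure S \<or> v \<in> closure S \<or> (bdd_below S \<and> Inf S \<in> closed_segment u v)"
  proof (cases "m \<in> closure S \<or> M \<in> closure S")
    case True
    then show ?thesis unfolding m_def M_def by (auto simp: min_def max_def split: if_splits)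
  next
    case False
    have "m \<le> x" "x \<le> M" using x(2) seg by auto
    have between: "m < y \<and> y < M" if "y \<in> closure S" for y
      using ivl[of y x m] ivl[of x y M] that x(1) \<open>m \<le> x\<close> \<open>x \<le> M\<close> False by fastforce
    have "bdd_below S"
    proof (rule bdd_belowI)
      fix y assume "y \<in> S"
      then have "y \<in> closure S" using closure_subset by blast
      then show "m \<le> y" using between by fastforce
    qed
    then have "Inf S \<in> {m..M}"
      using between[OF closure_contains_Inf[OF S(1)]] by auto
    then show ?thesis using \<open>bdd_below S\<close> seg by auto
  qed
next
  assume "u \<in> closure S \<or> v \<in> closure S \<or> (bdd_below S \<and> Inf S \<in> closed_segment u v)"
  then obtain y where "y \<in> closure S" "y \<in> closed_segment u v"
    using closure_contains_Inf[OF S(1)] ends_in_segment[of u v] by (elim disjE conjE) auto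
  then show "closure S \<inter> closed_segment u v \<noteq> {}" by blast
qed

lemma closure_convex_bounded_real:
  fixes S :: "real set"
  assumes "S \<noteq> {}" "convex S" "bounded S"
  shows "closure S = {Inf S..Sup S}"
proof
  have bdd: "bdd_below S" "bdd_above S"
    using assms(3) bounded_imp_bdd_below bounded_imp_bdd_above by auto
  then have "S \<subseteq> {Inf S..Sup S}" by (simp add: subset_iff cInf_lower cSup_upper)
  then show "closure S \<subseteq> {Inf S..Sup S}" by (rule closure_minimal[OF _ closed_atLeastAtMost])
  have ivl: "is_interval (closure S)"
    using assms(2) convex_closure is_interval_convex_1 by blast
  have "Inf S \<in> closure S" "Sup S \<in> closure S"
    using closure_contains_Inf closure_contains_Sup assms(1) bdd by auto
  then show "{Inf S..Sup S} \<subseteq> closure S"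
    using ivl unfolding is_interval_1 by (meson atLeastAtMost_iff subsetI)
qed

lemma closed_segment_affine_image_real:
  fixes a k u v :: real
  shows "(\<lambda>x. a + k * x) ` closed_segment u v = closed_segment (a + k * u) (a + k * v)"
proof -
  have "closed_segment (k * u) (k * v) = (*) k ` closed_segment u v"
    by (rule closed_segment_linear_image) (rule linear_times)
  then show ?thesis
    by (simp add: closed_segment_translation image_image)
qed

lemma closure_convex_meets_affine_image_iff:
  fixes S B :: "real set"
  assumes S: "S \<noteq> {}" "convex S" and B: "B \<noteq> {}" "convex B" "bounded B" and "k \<noteq> 0"
  shows "(\<exists>\<beta>\<in>closure B. a + k * \<beta> \<in> closure S) \<longleftrightarrow>
    a + k * Inf B \<in> closure S \<or> a + k * Sup B \<in> closure S
    \<or> (bdd_below S \<and> (Inf S - a) / k \<in> closure B)"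
proof -
  have "closure B = {Inf B..Sup B}" "Inf B \<le> Sup B"
    using closure_convex_bounded_real[OF B] closure_subset B(1) by fastforce+
  then have img: "(\<lambda>\<beta>. a + k * \<beta>) ` closure B = closed_segment (a + k * Inf B) (a + k * Sup B)"
    by (simp add: closed_segment_affine_image_real flip: closed_segment_eq_real_ivl1)
  have inv: "x \<in> (\<lambda>\<beta>. a + k * \<beta>) ` closure B \<longleftrightarrow> (x - a) / k \<in> closure B" for x
    using \<open>k \<noteq> 0\<close> by (force simp: image_iff field_simps)
  have "(\<exists>\<beta>\<in>closure B. a + k * \<beta> \<in> closure S) \<longleftrightarrow>
      closure S \<inter> (\<lambda>\<beta>. a + k * \<beta>) ` closure B \<noteq> {}"
    by blast
  also have "\<dots> \<longleftrightarrow> a + k * Inf B \<in> closure S \<or> a + k * Sup B \<in> closure S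
      \<or> (bdd_below S \<and> Inf S \<in> (\<lambda>\<beta>. a + k * \<beta>) ` closure B)"
    unfolding img by (rule closure_convex_meets_closed_segment_iff[OF S])
  finally show ?thesis unfolding inv .
qed

lemma Inf_ereal_image:
  fixes S :: "real set"
  assumes "S \<noteq> {}"
  shows "Inf (ereal ` S) = (if bdd_below S then ereal (Inf S) else -\<infinity>)"
proof (cases "bdd_below S")
  case True
  then show ?thesis using ereal_Inf'[OF True assms] by simp
next
  case False
  have "Inf (ereal ` S) = -\<infinity>"
  proof (rule ccontr)
    assume "Inf (ereal ` S) \<noteq> -\<infinity>"
    moreover obtain x where "x \<in> S" using assms by blast
    moreover have "Inf (ereal ` S) \<le> ereal y" if "y \<in> S" for y
      using that by (simp add: INF_lower)
    ultimately have "bdd_below S"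
      by (cases "Inf (ereal ` S)") (force intro: bdd_belowI)+
    then show False using False by blast
  qed
  then show ?thesis using False by simp
qed

lemma ereal_in_closure_ereal_image_iff:
  "ereal x \<in> closure (ereal ` S) \<longleftrightarrow> x \<in> closure S"
proof
  assume "ereal x \<in> closure (ereal ` S)"
  then obtain g where g: "\<And>n. g n \<in> ereal ` S" "g \<longlonglongrightarrow> ereal x"
    unfolding closure_sequential by blast
  define f where "f n = real_of_ereal (g n)" for n
  have "g n = ereal (f n) \<and> f n \<in> S" for n
    using g(1)[of n] by (auto simp: f_def)
  then have "g = (\<lambda>n. ereal (f n))" "\<And>n. f n \<in> S" by auto
  moreover from this g(2) have "f \<longlonglongrightarrow> x" by (simp add: lim_ereal)
  ultimately show "x \<in> closure S" unfolding closure_sequential by blast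
next
  assume "x \<in> closure S"
  then obtain f where "\<And>n. f n \<in> S" "f \<longlonglongrightarrow> x"
    unfolding closure_sequential by blast
  then show "ereal x \<in> closure (ereal ` S)" unfolding closure_sequential
    by (intro exI[of _ "\<lambda>n. ereal (f n)"]) (auto simp: lim_ereal)
qed

lemma closure_ereal_image_bounded_finite:
  fixes S :: "real set"
  assumes "bounded S" "x \<in> closure (ereal ` S)"
  shows "\<bar>x\<bar> \<noteq> \<infinity>"
proof -
  obtain M where "\<And>y. y \<in> S \<Longrightarrow> \<bar>y\<bar> \<le> M" using assms(1) bounded_real by blast
  then have "ereal ` S \<subseteq> {ereal (-M)..ereal M}" by (force simp: abs_le_iff)
  then have "closure (ereal ` S) \<subseteq> {ereal (-M)..ereal M}"
    by (rule closure_minimal) simp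
  then show ?thesis using assms(2) by auto
qed

lemma ereal_times_Inf_in_closure_bounded_iff:
  fixes S B :: "real set"
  assumes "S \<noteq> {}" "bounded B" "r \<noteq> 0"
  shows "ereal r * (ereal s + Inf (ereal ` S)) \<in> closure (ereal ` B) \<longleftrightarrow>
    bdd_below S \<and> r * (s + Inf S) \<in> closure B"
proof (cases "bdd_below S")
  case True
  then show ?thesis
    by (simp add: Inf_ereal_image[OF assms(1)] ereal_in_closure_ereal_image_iff)
next
  case False
  then have "\<bar>ereal r * (ereal s + Inf (ereal ` S))\<bar> = \<infinity>"
    using assms(3) by (simp add: Inf_ereal_image[OF assms(1)])
  then have "ereal r * (ereal s + Inf (ereal ` S)) \<notin> closure (ereal ` B)"
    using closure_ereal_image_bounded_finite[OF assms(2)] by metis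
  then show ?thesis using False by simp
qed

lemma quadratic_factor_eq_0_imp_delta:
  assumes "of_real c - \<i> * of_real d * z - z\<^sup>2 = 0"
  shows "z = delta_p c d \<or> z = delta_m c d"
proof -
  have "(z + \<i> * of_real d / 2)\<^sup>2 = of_real (c - d\<^sup>2 / 4)"
    using assms by (simp add: power2_eq_square algebra_simps)
  then have "(z + \<i> * of_real d / 2)\<^sup>2 = (csqrt (of_real (c - d\<^sup>2 / 4)))\<^sup>2"
    by simp
  then show ?thesis
    unfolding power2_eq_iff delta_p_def delta_m_def by (auto simp: algebra_simps)
qed

lemma pT_imaginary_axis:
  "pT c d \<alpha> \<beta> (\<i> * of_real t) = of_real ((\<alpha> + t\<^sup>2) * (c + d * t + t\<^sup>2) + \<beta> * t\<^sup>2)"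
  by (simp add: pT_def complex_eq_iff power2_eq_square algebra_simps)

lemma pT_root_sequence_converges:
  assumes roots: "\<And>k. pT c d (as k) (bs k) (zs k) = 0"
    and lim: "bs \<longlonglongrightarrow> \<beta>" "zs \<longlonglongrightarrow> z"
    and nz: "of_real c - \<i> * of_real d * z - z\<^sup>2 \<noteq> 0"
  shows "\<exists>\<alpha>. as \<longlonglongrightarrow> \<alpha> \<and> pT c d \<alpha> \<beta> z = 0"
proof -
  define Q where "Q w = of_real c - \<i> * of_real d * w - w\<^sup>2" for w
  have Q_lim: "(\<lambda>k. Q (zs k)) \<longlonglongrightarrow> Q z" unfolding Q_def by (intro tendsto_intros lim)
  have "Q z \<noteq> 0" using nz by (simp add: Q_def)
  txt \<open>Near z the quadratic factor is nonzero, so a root determines alpha from w and beta.\<close>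
  have "eventually (\<lambda>k. zs k ^ 2 + of_real (bs k) * zs k ^ 2 / Q (zs k) = of_real (as k)) sequentially"
    using tendsto_imp_eventually_ne[OF Q_lim \<open>Q z \<noteq> 0\<close>]
  proof (rule eventually_mono)
    fix k assume "Q (zs k) \<noteq> 0"
    moreover have "(of_real (as k) - zs k ^ 2) * Q (zs k) = of_real (bs k) * zs k ^ 2"
      using roots[of k] by (simp add: pT_def Q_def algebra_simps)
    ultimately show "zs k ^ 2 + of_real (bs k) * zs k ^ 2 / Q (zs k) = of_real (as k)"
      by (simp add: field_simps)
  qed
  moreover have "(\<lambda>k. zs k ^ 2 + of_real (bs k) * zs k ^ 2 / Q (zs k))
      \<longlonglongrightarrow> z ^ 2 + of_real \<beta> * z ^ 2 / Q z" (is "_ \<longlonglongrightarrow> ?L")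
    by (intro tendsto_intros lim Q_lim \<open>Q z \<noteq> 0\<close>)
  ultimately have "(\<lambda>k. complex_of_real (as k)) \<longlonglongrightarrow> ?L"
    by (rule Lim_transform_eventually[rotated])
  then have as_lim: "as \<longlonglongrightarrow> Re ?L"
    using tendsto_Re by fastforce
  have "(\<lambda>k. pT c d (as k) (bs k) (zs k)) \<longlonglongrightarrow> pT c d (Re ?L) \<beta> z"
    unfolding pT_def by (intro tendsto_intros as_lim lim)
  then have "pT c d (Re ?L) \<beta> z = 0"
    unfolding roots by (rule LIMSEQ_unique[OF _ tendsto_const])
  then show ?thesis using as_lim by blast
qed

lemma root_vals_iff_finite_root:
  assumes "of_real c - \<i> * of_real d * z - z\<^sup>2 \<noteq> 0"
  shows "z \<in> root_vals c d a \<beta> \<longleftrightarrow> (\<exists>\<alpha>. a = ereal \<alpha> \<and> pT c d \<alpha> \<beta> z = 0)"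
proof
  assume "z \<in> root_vals c d a \<beta>"
  then obtain as bs zs where roots: "\<And>k. pT c d (as k) (bs k) (zs k) = 0"
    and a_lim: "((\<lambda>k. ereal (as k)) \<longlongrightarrow> a) sequentially"
    and lim: "bs \<longlonglongrightarrow> \<beta>" "zs \<longlonglongrightarrow> z"
    unfolding root_vals_def by blast
  obtain \<alpha> where "as \<longlonglongrightarrow> \<alpha>" "pT c d \<alpha> \<beta> z = 0"
    using pT_root_sequence_converges[OF roots lim assms] by blast
  moreover from this(1) have "a = ereal \<alpha>"
    using LIMSEQ_unique[OF a_lim] by (simp add: lim_ereal)
  ultimately show "\<exists>\<alpha>. a = ereal \<alpha> \<and> pT c d \<alpha> \<beta> z = 0" by blast
next
  assume "\<exists>\<alpha>. a = ereal \<alpha> \<and> pT c d \<alpha> \<beta> z = 0"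
  then show "z \<in> root_vals c d a \<beta>"
    unfolding root_vals_def by force
qed

lemma W_Omega_iff_finite_root:
  assumes "of_real c - \<i> * of_real d * z - z\<^sup>2 \<noteq> 0"
  shows "z \<in> W_Omega c d WA WB \<longleftrightarrow> (\<exists>\<alpha>\<in>closure WA. \<exists>\<beta>\<in>closure WB. pT c d \<alpha> \<beta> z = 0)"
proof
  assume "z \<in> W_Omega c d WA WB"
  then show "\<exists>\<alpha>\<in>closure WA. \<exists>\<beta>\<in>closure WB. pT c d \<alpha> \<beta> z = 0"
    unfolding W_Omega_def
    by (auto simp: root_vals_iff_finite_root[OF assms] ereal_in_closure_ereal_image_iff)
next
  assume "\<exists>\<alpha>\<in>closure WA. \<exists>\<beta>\<in>closure WB. pT c d \<alpha> \<beta> z = 0"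
  then obtain \<alpha> \<beta> where "\<alpha> \<in> closure WA" "\<beta> \<in> closure WB" "pT c d \<alpha> \<beta> z = 0"
    by blast
  then have "ereal \<alpha> \<in> closure (ereal ` WA)" "z \<in> root_vals c d (ereal \<alpha>) \<beta>"
    by (auto simp: root_vals_iff_finite_root[OF assms] ereal_in_closure_ereal_image_iff)
  then show "z \<in> W_Omega c d WA WB"
    unfolding W_Omega_def using \<open>\<beta> \<in> closure WB\<close> by blast
qed

theorem proposition2p4:
  fixes WA WB :: "real set" and c d t :: real and \<omega> :: complex
  assumes WA: "WA \<noteq> {}" "convex WA"
    and WB: "WB \<noteq> {}" "convex WB" "bounded WB" "WB \<noteq> {0}"
    and cd: "c \<ge> 0" "d > 0"
    and om: "\<omega> = \<i> * of_real t" "\<omega> \<notin> {0, delta_p c d, delta_m c d}"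
  shows "\<omega> \<in> W_Omega c d WA WB \<longleftrightarrow>
     (ereal (- t\<^sup>2 - t\<^sup>2 / (c + d * t + t\<^sup>2) * Inf WB) \<in> closure (ereal ` WA)
    \<or> ereal (- t\<^sup>2 - t\<^sup>2 / (c + d * t + t\<^sup>2) * Sup WB) \<in> closure (ereal ` WA)
    \<or> ereal (- (c + d * t + t\<^sup>2) / t\<^sup>2) * (ereal (t\<^sup>2) + Inf (ereal ` WA))
        \<in> closure (ereal ` WB))"
proof -
  define q where "q = c + d * t + t\<^sup>2"
  have quad: "of_real c - \<i> * of_real d * \<omega> - \<omega>\<^sup>2 = of_real q"
    unfolding om q_def by (simp add: complex_eq_iff power2_eq_square)
  have "q \<noteq> 0" "t \<noteq> 0"
    using quadratic_factor_eq_0_imp_delta[of c d \<omega>] om unfolding quad by auto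
  have root_iff: "pT c d \<alpha> \<beta> \<omega> = 0 \<longleftrightarrow> \<alpha> = - t\<^sup>2 + - (t\<^sup>2 / q) * \<beta>" for \<alpha> \<beta>
    unfolding om(1) pT_imaginary_axis q_def[symmetric] of_real_eq_0_iff
    using \<open>q \<noteq> 0\<close> by (auto simp: field_simps)
  have "\<omega> \<in> W_Omega c d WA WB \<longleftrightarrow> (\<exists>\<beta>\<in>closure WB. - t\<^sup>2 + - (t\<^sup>2 / q) * \<beta> \<in> closure WA)"
    using W_Omega_iff_finite_root[of c d \<omega>] quad \<open>q \<noteq> 0\<close> root_iff by auto
  also have "\<dots> \<longleftrightarrow> - t\<^sup>2 + - (t\<^sup>2 / q) * Inf WB \<in> closure WA
      \<or> - t\<^sup>2 + - (t\<^sup>2 / q) * Sup WB \<in> closure WA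
      \<or> (bdd_below WA \<and> - q / t\<^sup>2 * (t\<^sup>2 + Inf WA) \<in> closure WB)"
    using closure_convex_meets_affine_image_iff[OF WA WB(1-3), of "- (t\<^sup>2 / q)" "- t\<^sup>2"]
      \<open>q \<noteq> 0\<close> \<open>t \<noteq> 0\<close> by (simp add: field_simps)
  finally show ?thesis
    using ereal_times_Inf_in_closure_bounded_iff[OF WA(1) WB(3), of "- q / t\<^sup>2" "t\<^sup>2"]
      \<open>q \<noteq> 0\<close> \<open>t \<noteq> 0\<close>
    by (simp add: q_def ereal_in_closure_ereal_image_iff)
qed

end
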